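(* Let $\lambda>0$. For every irrational $\alpha$, $\sigma^{\mathcal{H}}\setminus[-\lambda,\lambda]\neq\emptyset$.
   Context: $\mathbb{T}=\mathbb{R}/\mathbb{Z}$. For $\theta\in\mathbb{T}$, $n\in\mathbb{Z}$ put $v(\theta,n)=\cos2\pi((n-1)\alpha+\theta)$ if $n$ is odd and $v(\theta,n)=\cos 2\pi(n\alpha+\theta)$ if $n$ is even; $c(\theta,n)=\lambda$ if $n$ is odd and $c(\theta,n)=\cos2\pi(n\alpha+\theta)$ if $n$ is even. Let $\mathbb{T}_0=\{\theta:\cos 2\pi(n\alpha+\theta)\neq 0\ \forall n\}$ and for $\theta\in\mathbb{T}_0$ let $\mathcal{H}_\theta$ act on $\ell^2(\mathbb{Z})$ by $(\mathcal{H}_\theta u)(n)=c(\theta,n)u(n+1)+c(\theta,n-1)u(n-1)+v(\theta,n)u(n)$; $\sigma^{\mathcal{H}}$ denotes its spectrum, which is independent of $\theta$. *)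

theory Defs
  imports "HOL-Analysis.Analysis"
begin

definition l2Z :: "(int \<Rightarrow> complex) set" where
  "l2Z = {u. (\<lambda>n. (cmod (u n))\<^sup>2) summable_on UNIV}"

text \<open>Potential v(theta,n); theta is a real representative of a point of R/Z.\<close>
definition vpot :: "real \<Rightarrow> real \<Rightarrow> int \<Rightarrow> real" where
  "vpot \<alpha> \<theta> n = (if odd n then cos (2 * pi * (real_of_int (n - 1) * \<alpha> + \<theta>))
                   else cos (2 * pi * (real_of_int n * \<alpha> + \<theta>)))"

definition chop :: "real \<Rightarrow> real \<Rightarrow> real \<Rightarrow> int \<Rightarrow> real" where
  "chop lam \<alpha> \<theta> n = (if odd n then lam else cos (2 * pi * (real_of_int n * \<alpha> + \<theta>)))"

definition T0 :: "real \<Rightarrow> real set" where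
  "T0 \<alpha> = {\<theta>. \<forall>n::int. cos (2 * pi * (real_of_int n * \<alpha> + \<theta>)) \<noteq> 0}"

definition Hop :: "real \<Rightarrow> real \<Rightarrow> real \<Rightarrow> (int \<Rightarrow> complex) \<Rightarrow> (int \<Rightarrow> complex)" where
  "Hop lam \<alpha> \<theta> u = (\<lambda>n. complex_of_real (chop lam \<alpha> \<theta> n) * u (n + 1)
                        + complex_of_real (chop lam \<alpha> \<theta> (n - 1)) * u (n - 1)
                        + complex_of_real (vpot \<alpha> \<theta> n) * u n)"

text \<open>Spectrum of the bounded operator H_theta on l2(Z): E is in the spectrum iff
  H - E is not a bijection of l2(Z) onto itself (bounded inverse is then automatic).\<close>
definition specH :: "real \<Rightarrow> real \<Rightarrow> real \<Rightarrow> complex set" where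
  "specH lam \<alpha> \<theta> = {E. \<not> bij_betw (\<lambda>u. (\<lambda>n. Hop lam \<alpha> \<theta> u n - E * u n)) l2Z l2Z}"

end

theory Submission
  imports Defs
begin

text \<open>
  Let \<open>M\<close> and \<open>m\<close> be the supremum and infimum of the Rayleigh quotients of \<open>H\<close> over finitely
  supported real vectors. Both lie in the spectrum. The coefficients of \<open>H\<close> are almost
  periodic along shifts \<open>2k\<close> for which \<open>2k\<alpha>\<close> is close to an integer (Dirichlet), so normalised
  near-maximisers \<open>x\<^sub>k\<close> of defect \<open>8\<^sup>-\<^sup>k\<close> can be placed on disjoint windows moving off to
  infinity. Their sum \<open>w\<close> with weights \<open>2\<^sup>-\<^sup>k\<close> is square summable but not in the range of
  \<open>H - M\<close>: if \<open>(H - M) r = w\<close>, testing \<open>H - M \<le> 0\<close> against \<open>r + 4\<^sup>k x\<^sub>k\<close> gives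
  \<open>2\<^sup>k \<le> const\<close>. Finally, the test vectors \<open>(1, \<plusminus>1)\<close> on the sites 1, 2 have Rayleigh
  quotients \<open>\<plusminus>\<lambda> + (v 1 + v 2) / 2\<close>, and \<open>v 1 + v 2 = 2 cos 2\<pi>(\<alpha> + \<theta>) cos 2\<pi>\<alpha> \<noteq> 0\<close>,
  so \<open>M > \<lambda>\<close> or \<open>m < -\<lambda>\<close>.
\<close>

definition jacobi :: "(int \<Rightarrow> real) \<Rightarrow> (int \<Rightarrow> real) \<Rightarrow> (int \<Rightarrow> real) \<Rightarrow> int \<Rightarrow> real" where
  "jacobi c v x n = c n * x (n + 1) + c (n - 1) * x (n - 1) + v n * x n"

definition jacobi_complex ::
    "(int \<Rightarrow> real) \<Rightarrow> (int \<Rightarrow> real) \<Rightarrow> (int \<Rightarrow> complex) \<Rightarrow> int \<Rightarrow> complex" where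
  "jacobi_complex c v u n = of_real (c n) * u (n + 1) + of_real (c (n - 1)) * u (n - 1) + of_real (v n) * u n"

definition vanishes_outside :: "int \<Rightarrow> int \<Rightarrow> (int \<Rightarrow> real) \<Rightarrow> bool" where
  "vanishes_outside a b x \<longleftrightarrow> (\<forall>n. n < a \<or> b < n \<longrightarrow> x n = 0)"

definition sqnorm :: "int \<Rightarrow> int \<Rightarrow> (int \<Rightarrow> real) \<Rightarrow> real" where
  "sqnorm a b x = (\<Sum>n\<in>{a..b}. (x n)\<^sup>2)"

definition jacobi_pair ::
    "(int \<Rightarrow> real) \<Rightarrow> (int \<Rightarrow> real) \<Rightarrow> int \<Rightarrow> int \<Rightarrow> (int \<Rightarrow> real) \<Rightarrow> (int \<Rightarrow> real) \<Rightarrow> real" where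
  "jacobi_pair c v a b x y = (\<Sum>n\<in>{a..b}. jacobi c v x n * y n)"

abbreviation jacobi_form ::
    "(int \<Rightarrow> real) \<Rightarrow> (int \<Rightarrow> real) \<Rightarrow> int \<Rightarrow> int \<Rightarrow> (int \<Rightarrow> real) \<Rightarrow> real" where
  "jacobi_form c v a b x \<equiv> jacobi_pair c v a b x x"

lemma sum_int_shift:
  fixes a b s :: int
  shows "(\<Sum>n\<in>{a..b}. f (n + s)) = (\<Sum>n\<in>{a + s..b + s}. f n)"
  by (rule sum.reindex_bij_witness[where i="\<lambda>n. n - s" and j="\<lambda>n. n + s"]) auto

lemma vanishes_outside_mono:
  "vanishes_outside a b x \<Longrightarrow> a' \<le> a \<Longrightarrow> b \<le> b' \<Longrightarrow> vanishes_outside a' b' x"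
  unfolding vanishes_outside_def by force

lemma extend_window:
  assumes "vanishes_outside a b x" "a' \<le> a" "b \<le> b'"
  shows "sqnorm a' b' x = sqnorm a b x" "jacobi_pair c v a' b' y x = jacobi_pair c v a b y x"
  unfolding sqnorm_def jacobi_pair_def
  by (rule sum.mono_neutral_right; use assms in \<open>auto simp: vanishes_outside_def\<close>)+

lemma sqnorm_nonneg: "sqnorm a b x \<ge> 0"
  unfolding sqnorm_def by (simp add: sum_nonneg)

lemma le_if_sqnorm_neq_0: "sqnorm a b x \<noteq> 0 \<Longrightarrow> a \<le> b"
  unfolding sqnorm_def by (cases "a \<le> b") auto

lemma jacobi_form_eq_0_if_sqnorm_eq_0:
  assumes "sqnorm a b x = 0"
  shows "jacobi_form c v a b x = 0"
proof -
  have "\<forall>n\<in>{a..b}. x n = 0"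
    using assms unfolding sqnorm_def by (subst (asm) sum_nonneg_eq_0_iff) auto
  then show ?thesis unfolding jacobi_pair_def by simp
qed

lemma sum_shifted_squares_le:
  assumes "vanishes_outside a b x" "\<bar>s\<bar> \<le> 1"
  shows "(\<Sum>n\<in>{a..b}. (x (n + s))\<^sup>2) \<le> sqnorm a b x"
proof -
  have "(\<Sum>n\<in>{a..b}. (x (n + s))\<^sup>2) = (\<Sum>n\<in>{a + s..b + s}. (x n)\<^sup>2)"
    by (rule sum_int_shift)
  also have "\<dots> \<le> sqnorm (a - 1) (b + 1) x"
    unfolding sqnorm_def by (rule sum_mono2) (use assms(2) in auto)
  also have "\<dots> = sqnorm a b x"
    by (rule extend_window(1)[OF assms(1)]) simp_all
  finally show ?thesis .
qed

lemma abs_jacobi_form_le: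
  assumes "vanishes_outside a b x" "\<And>n. \<bar>c n\<bar> \<le> C" "\<And>n. \<bar>v n\<bar> \<le> C"
  shows "\<bar>jacobi_form c v a b x\<bar> \<le> 3 * C * sqnorm a b x"
proof -
  have C: "C \<ge> 0" using assms(2)[of 0] by simp
  have amgm: "\<bar>y * z\<bar> \<le> y\<^sup>2 / 2 + z\<^sup>2 / 2" for y z :: real
    using sum_squares_bound[of "\<bar>y\<bar>" "\<bar>z\<bar>"] by (simp add: abs_mult)
  have summand: "\<bar>jacobi c v x n * x n\<bar> \<le> C * ((x (n + 1))\<^sup>2 / 2 + (x (n - 1))\<^sup>2 / 2 + 2 * (x n)\<^sup>2)" for n
  proof -
    have "\<bar>jacobi c v x n * x n\<bar>
        \<le> \<bar>c n\<bar> * \<bar>x (n + 1) * x n\<bar> + \<bar>c (n - 1)\<bar> * \<bar>x (n - 1) * x n\<bar> + \<bar>v n\<bar> * (x n)\<^sup>2"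
    proof -
      have "jacobi c v x n * x n = c n * (x (n + 1) * x n) + c (n - 1) * (x (n - 1) * x n) + v n * (x n)\<^sup>2"
        by (simp add: jacobi_def algebra_simps power2_eq_square)
      also have "\<bar>\<dots>\<bar> \<le> \<bar>c n * (x (n + 1) * x n)\<bar> + \<bar>c (n - 1) * (x (n - 1) * x n)\<bar> + \<bar>v n * (x n)\<^sup>2\<bar>"
        by linarith
      finally show ?thesis by (simp add: abs_mult)
    qed
    also have "\<dots> \<le> C * ((x (n + 1))\<^sup>2 / 2 + (x n)\<^sup>2 / 2) + C * ((x (n - 1))\<^sup>2 / 2 + (x n)\<^sup>2 / 2)
        + C * (x n)\<^sup>2"
      by (intro add_mono mult_mono assms amgm) (auto intro: C)
    finally show ?thesis by (simp add: algebra_simps)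
  qed
  have "\<bar>jacobi_form c v a b x\<bar>
      \<le> (\<Sum>n\<in>{a..b}. C * ((x (n + 1))\<^sup>2 / 2 + (x (n - 1))\<^sup>2 / 2 + 2 * (x n)\<^sup>2))"
    unfolding jacobi_pair_def by (rule order_trans[OF sum_abs sum_mono]) (rule summand)
  also have "\<dots> = C * ((\<Sum>n\<in>{a..b}. (x (n + 1))\<^sup>2) / 2 + (\<Sum>n\<in>{a..b}. (x (n - 1))\<^sup>2) / 2
      + 2 * sqnorm a b x)"
    by (simp add: sqnorm_def sum_distrib_left sum.distrib sum_divide_distrib algebra_simps)
  also have "\<dots> \<le> C * (sqnorm a b x / 2 + sqnorm a b x / 2 + 2 * sqnorm a b x)"
    using sum_shifted_squares_le[OF assms(1), of 1] sum_shifted_squares_le[OF assms(1), of "-1"] C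
    by (intro mult_left_mono) auto
  finally show ?thesis by (simp add: algebra_simps)
qed

lemma jacobi_summation_by_parts:
  assumes "vanishes_outside a b x" "vanishes_outside a b y"
  shows "(\<Sum>n\<in>{a..b}. c n * x (n + 1) * y n) = (\<Sum>n\<in>{a..b}. c (n - 1) * x n * y (n - 1))"
proof -
  define f where "f n = c (n - 1) * x n * y (n - 1)" for n
  have "(\<Sum>n\<in>{a..b}. c n * x (n + 1) * y n) = (\<Sum>n\<in>{a..b}. f (n + 1))"
    by (simp add: f_def)
  also have "\<dots> = (\<Sum>n\<in>{a + 1..b + 1}. f n)"
    by (rule sum_int_shift)
  also have "\<dots> = (\<Sum>n\<in>{a..b + 1}. f n)"
    by (rule sum.mono_neutral_left) (use assms in \<open>auto simp: f_def vanishes_outside_def\<close>)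
  also have "\<dots> = (\<Sum>n\<in>{a..b}. f n)"
    by (rule sum.mono_neutral_right) (use assms in \<open>auto simp: f_def vanishes_outside_def\<close>)
  finally show ?thesis by (simp add: f_def)
qed

lemma jacobi_pair_commute:
  assumes "vanishes_outside a b x" "vanishes_outside a b y"
  shows "jacobi_pair c v a b x y = jacobi_pair c v a b y x"
  using jacobi_summation_by_parts[OF assms, of c] jacobi_summation_by_parts[OF assms(2,1), of c]
  unfolding jacobi_pair_def jacobi_def by (simp add: sum.distrib algebra_simps)

lemma jacobi_form_add:
  assumes "vanishes_outside a b x" "vanishes_outside a b y"
  shows "jacobi_form c v a b (\<lambda>n. x n + t * y n)
    = jacobi_form c v a b x + 2 * t * jacobi_pair c v a b x y + t\<^sup>2 * jacobi_form c v a b y"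
proof -
  have "jacobi_form c v a b (\<lambda>n. x n + t * y n)
      = jacobi_form c v a b x + t * jacobi_pair c v a b x y + t * jacobi_pair c v a b y x
        + t\<^sup>2 * jacobi_form c v a b y"
    unfolding jacobi_pair_def jacobi_def
    by (simp add: sum.distrib sum_distrib_left algebra_simps power2_eq_square)
  then show ?thesis using jacobi_pair_commute[OF assms] by simp
qed

lemma jacobi_shift_potential: "jacobi c (\<lambda>n. v n - m) x n = jacobi c v x n - m * x n"
  unfolding jacobi_def by (simp add: algebra_simps)

lemma jacobi_form_shift_potential:
  "jacobi_form c (\<lambda>n. v n - m) a b x = jacobi_form c v a b x - m * sqnorm a b x"
  unfolding jacobi_pair_def sqnorm_def jacobi_shift_potential
  by (simp add: sum_subtractf sum_distrib_left algebra_simps power2_eq_square)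

lemma abs_jacobi_form_shift_potential_le:
  assumes "vanishes_outside a b x" "\<And>n. \<bar>c n\<bar> \<le> C" "\<And>n. \<bar>v n\<bar> \<le> C"
  shows "\<bar>jacobi_form c (\<lambda>n. v n - m) a b x\<bar> \<le> 3 * (C + \<bar>m\<bar>) * sqnorm a b x"
proof (rule abs_jacobi_form_le[OF assms(1)])
  show "\<bar>c n\<bar> \<le> C + \<bar>m\<bar>" for n using assms(2)[of n] by linarith
  show "\<bar>v n - m\<bar> \<le> C + \<bar>m\<bar>" for n using assms(3)[of n] abs_triangle_ineq4[of "v n" m] by linarith
qed

lemma jacobi_pair_eq_if_jacobi_eq:
  assumes "\<And>n. n \<in> {a..b} \<Longrightarrow> jacobi c v r n = s * x n" "sqnorm a b x = 1"
  shows "jacobi_pair c v a b r x = s"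
proof -
  have "jacobi_pair c v a b r x = (\<Sum>n\<in>{a..b}. s * (x n)\<^sup>2)"
    unfolding jacobi_pair_def using assms(1) by (simp add: power2_eq_square mult.assoc)
  also have "\<dots> = s" using assms(2) by (simp add: sqnorm_def flip: sum_distrib_left)
  finally show ?thesis .
qed

lemma jacobi_form_scale: "jacobi_form c v a b (\<lambda>n. k * x n) = k\<^sup>2 * jacobi_form c v a b x"
  unfolding jacobi_pair_def jacobi_def by (simp add: sum_distrib_left algebra_simps power2_eq_square)

lemma sqnorm_scale: "sqnorm a b (\<lambda>n. k * x n) = k\<^sup>2 * sqnorm a b x"
  unfolding sqnorm_def by (simp add: sum_distrib_left power_mult_distrib)

lemma jacobi_form_diff:
  "jacobi_form c' v' a b x - jacobi_form c v a b x = jacobi_form (\<lambda>n. c' n - c n) (\<lambda>n. v' n - v n) a b x"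
  unfolding jacobi_pair_def jacobi_def by (simp add: sum_subtractf[symmetric] algebra_simps)

lemma jacobi_form_uminus: "jacobi_form (\<lambda>n. - c n) (\<lambda>n. - v n) a b x = - jacobi_form c v a b x"
  unfolding jacobi_pair_def jacobi_def by (simp add: sum_negf[symmetric] algebra_simps)

lemma
  fixes s :: int
  shows jacobi_form_translate:
      "jacobi_form c v (a + s) (b + s) (\<lambda>n. x (n - s)) = jacobi_form (\<lambda>n. c (n + s)) (\<lambda>n. v (n + s)) a b x"
    and sqnorm_translate: "sqnorm (a + s) (b + s) (\<lambda>n. x (n - s)) = sqnorm a b x"
    and vanishes_outside_translate: "vanishes_outside a b x \<Longrightarrow> vanishes_outside (a + s) (b + s) (\<lambda>n. x (n - s))"
  unfolding jacobi_pair_def sqnorm_def vanishes_outside_def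
  by (auto simp: sum_int_shift[symmetric] jacobi_def algebra_simps)

definition rayleigh_quotients :: "(int \<Rightarrow> real) \<Rightarrow> (int \<Rightarrow> real) \<Rightarrow> real set" where
  "rayleigh_quotients c v =
    {jacobi_form c v a b x / sqnorm a b x | a b x. vanishes_outside a b x \<and> sqnorm a b x > 0}"

definition rayleigh_sup :: "(int \<Rightarrow> real) \<Rightarrow> (int \<Rightarrow> real) \<Rightarrow> real" where
  "rayleigh_sup c v = Sup (rayleigh_quotients c v)"

definition rayleigh_inf :: "(int \<Rightarrow> real) \<Rightarrow> (int \<Rightarrow> real) \<Rightarrow> real" where
  "rayleigh_inf c v = Inf (rayleigh_quotients c v)"

lemma rayleigh_quotients_nonempty: "rayleigh_quotients c v \<noteq> {}"
proof -
  let ?x = "\<lambda>n::int. if n = 0 then 1 else 0 :: real"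
  have "vanishes_outside 0 0 ?x" "sqnorm 0 0 ?x = 1" by (auto simp: vanishes_outside_def sqnorm_def)
  then show ?thesis unfolding rayleigh_quotients_def by force
qed

lemma rayleigh_quotients_subset:
  assumes "\<And>n. \<bar>c n\<bar> \<le> C" "\<And>n. \<bar>v n\<bar> \<le> C"
  shows "rayleigh_quotients c v \<subseteq> {-(3 * C)..3 * C}"
proof
  fix q assume "q \<in> rayleigh_quotients c v"
  then obtain a b x where q: "q = jacobi_form c v a b x / sqnorm a b x" "vanishes_outside a b x" "sqnorm a b x > 0"
    unfolding rayleigh_quotients_def by blast
  have "\<bar>jacobi_form c v a b x\<bar> \<le> 3 * C * sqnorm a b x"
    by (rule abs_jacobi_form_le[OF q(2) assms])
  then show "q \<in> {-(3 * C)..3 * C}"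
    using q(3) unfolding q(1) by (simp add: abs_le_iff divide_le_eq le_divide_eq)
qed

lemma rayleigh_quotient_bounds:
  assumes "\<And>n. \<bar>c n\<bar> \<le> C" "\<And>n. \<bar>v n\<bar> \<le> C" "vanishes_outside a b x" "sqnorm a b x > 0"
  shows "rayleigh_inf c v \<le> jacobi_form c v a b x / sqnorm a b x"
    and "jacobi_form c v a b x / sqnorm a b x \<le> rayleigh_sup c v"
proof -
  have q: "jacobi_form c v a b x / sqnorm a b x \<in> rayleigh_quotients c v"
    using assms(3,4) unfolding rayleigh_quotients_def by blast
  have "rayleigh_quotients c v \<subseteq> {-(3 * C)..3 * C}"
    by (rule rayleigh_quotients_subset) (rule assms)+
  then have "bdd_below (rayleigh_quotients c v)" "bdd_above (rayleigh_quotients c v)"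
    by (meson bdd_below_Icc bdd_below_mono, meson bdd_above_Icc bdd_above_mono)
  with q show "rayleigh_inf c v \<le> jacobi_form c v a b x / sqnorm a b x"
    "jacobi_form c v a b x / sqnorm a b x \<le> rayleigh_sup c v"
    unfolding rayleigh_inf_def rayleigh_sup_def by (auto intro: cInf_lower cSup_upper)
qed

lemma jacobi_form_le_rayleigh_sup:
  assumes "\<And>n. \<bar>c n\<bar> \<le> C" "\<And>n. \<bar>v n\<bar> \<le> C" "vanishes_outside a b x"
  shows "jacobi_form c v a b x \<le> rayleigh_sup c v * sqnorm a b x"
proof (cases "sqnorm a b x = 0")
  case True
  then show ?thesis by (simp add: jacobi_form_eq_0_if_sqnorm_eq_0)
next
  case False
  then have "sqnorm a b x > 0" using sqnorm_nonneg[of a b x] by linarith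
  with rayleigh_quotient_bounds(2)[OF assms] show ?thesis by (simp add: divide_le_eq)
qed

lemma rayleigh_quotients_uminus:
  "rayleigh_quotients (\<lambda>n. - c n) (\<lambda>n. - v n) = uminus ` rayleigh_quotients c v"
  unfolding rayleigh_quotients_def jacobi_form_uminus by auto

lemma rayleigh_inf_eq_neg_sup: "rayleigh_inf c v = - rayleigh_sup (\<lambda>n. - c n) (\<lambda>n. - v n)"
  unfolding rayleigh_inf_def rayleigh_sup_def rayleigh_quotients_uminus Inf_real_def ..

definition far_almost_periodic :: "(int \<Rightarrow> real) \<Rightarrow> (int \<Rightarrow> real) \<Rightarrow> bool" where
  "far_almost_periodic c v \<longleftrightarrow>
    (\<forall>\<delta>>0. \<forall>L. \<exists>s\<ge>L. \<forall>n. \<bar>c (n + s) - c n\<bar> \<le> \<delta> \<and> \<bar>v (n + s) - v n\<bar> \<le> \<delta>)"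

lemma far_almost_periodic_uminus:
  "far_almost_periodic c v \<Longrightarrow> far_almost_periodic (\<lambda>n. - c n) (\<lambda>n. - v n)"
  unfolding far_almost_periodic_def by (simp add: abs_minus_commute)

lemma near_maximiser:
  assumes "\<And>n. \<bar>c n\<bar> \<le> C" "\<And>n. \<bar>v n\<bar> \<le> C" "\<epsilon> > 0"
  obtains a b x where "vanishes_outside a b x" "sqnorm a b x = 1"
    "rayleigh_sup c v - \<epsilon> < jacobi_form c v a b x"
proof -
  have "rayleigh_sup c v - \<epsilon> < Sup (rayleigh_quotients c v)"
    using assms(3) unfolding rayleigh_sup_def by simp
  then obtain q where "q \<in> rayleigh_quotients c v" "rayleigh_sup c v - \<epsilon> < q"
    using less_cSupE[OF _ rayleigh_quotients_nonempty] by blast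
  then obtain a b x where x: "vanishes_outside a b x" "sqnorm a b x > 0"
    and q: "rayleigh_sup c v - \<epsilon> < jacobi_form c v a b x / sqnorm a b x"
    unfolding rayleigh_quotients_def by blast
  define k where "k = 1 / sqrt (sqnorm a b x)"
  have k2: "k\<^sup>2 = 1 / sqnorm a b x"
    using x(2) by (simp add: k_def power_divide)
  show thesis
  proof
    show "vanishes_outside a b (\<lambda>n. k * x n)"
      using x(1) by (simp add: vanishes_outside_def)
    show "sqnorm a b (\<lambda>n. k * x n) = 1"
      using x(2) by (simp add: sqnorm_scale k2)
    show "rayleigh_sup c v - \<epsilon> < jacobi_form c v a b (\<lambda>n. k * x n)"
      using q by (simp add: jacobi_form_scale k2)
  qed
qed

lemma far_near_maximiser:
  assumes "\<And>n. \<bar>c n\<bar> \<le> C" "\<And>n. \<bar>v n\<bar> \<le> C" "far_almost_periodic c v" "\<epsilon> > 0"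
  shows "\<exists>a b x. L \<le> a \<and> vanishes_outside a b x \<and> sqnorm a b x = 1
    \<and> rayleigh_sup c v - \<epsilon> \<le> jacobi_form c v a b x"
proof -
  obtain a b x where x: "vanishes_outside a b x" "sqnorm a b x = 1"
    and q: "rayleigh_sup c v - \<epsilon> / 2 < jacobi_form c v a b x"
    by (rule near_maximiser[where c=c and v=v and C=C and \<epsilon>="\<epsilon> / 2"]) (use assms in auto)
  obtain s where "s \<ge> L - a"
    and s: "\<And>n. \<bar>c (n + s) - c n\<bar> \<le> \<epsilon> / 6 \<and> \<bar>v (n + s) - v n\<bar> \<le> \<epsilon> / 6"
    using assms(3,4) unfolding far_almost_periodic_def by (meson zero_less_divide_iff zero_less_numeral)
  have "\<bar>jacobi_form (\<lambda>n. c (n + s) - c n) (\<lambda>n. v (n + s) - v n) a b x\<bar> \<le> 3 * (\<epsilon> / 6) * sqnorm a b x"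
    by (rule abs_jacobi_form_le[OF x(1)]) (use s in auto)
  then have "\<bar>jacobi_form (\<lambda>n. c (n + s)) (\<lambda>n. v (n + s)) a b x - jacobi_form c v a b x\<bar> \<le> \<epsilon> / 2"
    unfolding jacobi_form_diff x(2) by simp
  then have "rayleigh_sup c v - \<epsilon> \<le> jacobi_form c v (a + s) (b + s) (\<lambda>n. x (n - s))"
    unfolding jacobi_form_translate using q by linarith
  moreover have "vanishes_outside (a + s) (b + s) (\<lambda>n. x (n - s))"
    by (rule vanishes_outside_translate[OF x(1)])
  moreover have "sqnorm (a + s) (b + s) (\<lambda>n. x (n - s)) = 1"
    using x(2) by (simp add: sqnorm_translate)
  moreover have "L \<le> a + s" using \<open>s \<ge> L - a\<close> by simp
  ultimately show ?thesis by blast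
qed

text \<open>The assumption \<open>far_out\<close> makes \<open>glued\<close> a finite sum: a window containing the
  site \<open>n\<close> has index at most \<open>n\<close>.\<close>
locale separated_windows =
  fixes A B :: "nat \<Rightarrow> int" and X :: "nat \<Rightarrow> int \<Rightarrow> real"
  assumes vanishes: "vanishes_outside (A k) (B k) (X k)"
    and normalised: "sqnorm (A k) (B k) (X k) = 1"
    and separated: "k < m \<Longrightarrow> B k < A m"
    and far_out: "int k \<le> A k"
begin

definition glued :: "int \<Rightarrow> real" where
  "glued n = (\<Sum>k\<le>nat n. (1 / 2) ^ k * X k n)"

lemma X_eq_0: "n \<notin> {A k..B k} \<Longrightarrow> X k n = 0"
  using vanishes[of k] by (auto simp: vanishes_outside_def)

lemma X_eq_0_off_window: "n \<in> {A m..B m} \<Longrightarrow> k \<noteq> m \<Longrightarrow> X k n = 0"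
  using separated[of k m] separated[of m k] by (intro X_eq_0) (auto simp: neq_iff)

lemma sum_at_window:
  assumes "n \<in> {A m..B m}" "finite I" "m \<in> I" "\<And>k. h k 0 = 0"
  shows "(\<Sum>k\<in>I. h k (X k n)) = h m (X m n)"
  using assms by (subst sum.remove[of _ m]) (auto simp: X_eq_0_off_window intro!: sum.neutral)

lemma window_index_le:
  assumes "n \<in> {A m..B m}"
  shows "m \<le> nat n"
proof -
  have "int m \<le> n" using assms far_out[of m] by simp
  then show ?thesis using nat_mono by fastforce
qed

lemma glued_on_window:
  assumes "n \<in> {A m..B m}"
  shows "glued n = (1 / 2) ^ m * X m n"
  unfolding glued_def by (rule sum_at_window[OF assms]) (use window_index_le[OF assms] in auto)

lemma glued_squared:
  assumes "nat n \<le> K"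
  shows "(glued n)\<^sup>2 = (\<Sum>k\<le>K. (1 / 4) ^ k * (X k n)\<^sup>2)"
proof (cases "\<exists>m. n \<in> {A m..B m}")
  case True
  then obtain m where m: "n \<in> {A m..B m}" by blast
  have "(\<Sum>k\<le>K. (1 / 4) ^ k * (X k n)\<^sup>2) = (1 / 4) ^ m * (X m n)\<^sup>2"
    by (rule sum_at_window[OF m]) (use window_index_le[OF m] assms in auto)
  moreover have "(2::real) ^ (m * 2) = 4 ^ m"
    by (subst mult.commute) (simp add: power_mult)
  ultimately show ?thesis
    by (simp add: glued_on_window[OF m] power_mult_distrib power_divide flip: power_mult)
next
  case False
  then show ?thesis by (simp add: glued_def X_eq_0)
qed

lemma sum_squares_X_le_1:
  assumes "finite F"
  shows "(\<Sum>n\<in>F. (X k n)\<^sup>2) \<le> 1"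
proof -
  have "(\<Sum>n\<in>F. (X k n)\<^sup>2) \<le> (\<Sum>n\<in>F \<union> {A k..B k}. (X k n)\<^sup>2)"
    by (rule sum_mono2) (use assms in auto)
  also have "\<dots> = sqnorm (A k) (B k) (X k)"
    unfolding sqnorm_def by (rule sum.mono_neutral_right) (use assms in \<open>auto simp: X_eq_0\<close>)
  finally show ?thesis by (simp add: normalised)
qed

lemma glued_in_l2Z: "(\<lambda>n. complex_of_real (glued n)) \<in> l2Z"
  unfolding l2Z_def
proof (simp, rule nonneg_bdd_above_summable_on)
  show "bdd_above (sum (\<lambda>n. (glued n)\<^sup>2) ` {F. F \<subseteq> UNIV \<and> finite F})"
  proof (rule bdd_aboveI, clarsimp)
    fix F :: "int set" assume F: "finite F"
    define K where "K = Max (insert 0 (nat ` F))"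
    have "(\<Sum>n\<in>F. (glued n)\<^sup>2) = (\<Sum>n\<in>F. \<Sum>k\<le>K. (1 / 4) ^ k * (X k n)\<^sup>2)"
      using F by (intro sum.cong refl glued_squared) (auto simp: K_def)
    also have "\<dots> = (\<Sum>k\<le>K. (1 / 4) ^ k * (\<Sum>n\<in>F. (X k n)\<^sup>2))"
      by (subst sum.swap) (simp add: sum_distrib_left)
    also have "\<dots> \<le> (\<Sum>k\<le>K. (1 / 4) ^ k)"
      using sum_squares_X_le_1[OF F] by (intro sum_mono) (simp add: mult_left_le)
    also have "\<dots> \<le> (\<Sum>k. (1 / 4 :: real) ^ k)"
      by (rule sum_le_suminf) (auto simp: summable_geometric)
    finally show "(\<Sum>n\<in>F. (glued n)\<^sup>2) \<le> 4 / 3"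
      by (simp add: suminf_geometric)
  qed
qed auto

end

lemma chained_intervals_disjoint:
  fixes A B :: "nat \<Rightarrow> 'a::linorder"
  assumes "\<And>k. A k \<le> B k" "\<And>k. B k < A (Suc k)" "k < m"
  shows "B k < A m"
  using assms(3)
proof (induction m)
  case (Suc m)
  then show ?case
    using assms(1,2)[of m] by (cases "k = m") (auto intro: order.strict_trans order.strict_trans2)
qed simp

lemma near_maximiser_windows:
  assumes "\<And>n. \<bar>c n\<bar> \<le> C" "\<And>n. \<bar>v n\<bar> \<le> C" "far_almost_periodic c v"
  obtains A B X where "separated_windows A B X"
    "\<And>k. rayleigh_sup c v - (1 / 8) ^ k \<le> jacobi_form c v (A k) (B k) (X k)"
proof -
  define P where "P k w \<longleftrightarrow> int k \<le> fst w \<and> vanishes_outside (fst w) (fst (snd w)) (snd (snd w))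
    \<and> sqnorm (fst w) (fst (snd w)) (snd (snd w)) = 1
    \<and> rayleigh_sup c v - (1 / 8) ^ k \<le> jacobi_form c v (fst w) (fst (snd w)) (snd (snd w))"
    for k and w :: "int \<times> int \<times> (int \<Rightarrow> real)"
  have start: "\<exists>w. P k w \<and> L \<le> fst w" if "int k \<le> L" for k L
  proof -
    have "\<exists>a b x. L \<le> a \<and> vanishes_outside a b x \<and> sqnorm a b x = 1
        \<and> rayleigh_sup c v - (1 / 8) ^ k \<le> jacobi_form c v a b x"
      by (rule far_near_maximiser[where c=c and v=v and C=C]) (use assms in auto)
    then obtain a b x where "L \<le> a" "vanishes_outside a b x" "sqnorm a b x = 1"
      "rayleigh_sup c v - (1 / 8) ^ k \<le> jacobi_form c v a b x" by blast
    then show ?thesis using that unfolding P_def by (intro exI[of _ "(a, b, x)"]) auto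
  qed
  obtain W where W: "\<And>k. P k (W k)" "\<And>k. fst (snd (W k)) < fst (W (Suc k))"
  proof -
    have "\<exists>W. \<forall>k. P k (W k) \<and> fst (snd (W k)) < fst (W (Suc k))"
    proof (rule dependent_nat_choice)
      show "\<exists>w. P 0 w" using start[of 0 0] by auto
      fix w k assume "P k w"
      show "\<exists>w'. P (Suc k) w' \<and> fst (snd w) < fst w'"
        using start[of "Suc k" "max (int (Suc k)) (fst (snd w) + 1)"] unfolding P_def by force
    qed
    then show thesis using that by blast
  qed
  define A where "A k = fst (W k)" for k
  define B where "B k = fst (snd (W k))" for k
  define X where "X k = snd (snd (W k))" for k
  have AB: "A k \<le> B k" for k
    using W(1)[of k] le_if_sqnorm_neq_0[of "A k" "B k" "X k"] unfolding P_def A_def B_def X_def by simp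
  have "B k < A (Suc k)" for k
    using W(2) by (simp add: A_def B_def)
  with AB have "separated_windows A B X"
    using W(1) by unfold_locales (auto simp: P_def A_def B_def X_def intro: chained_intervals_disjoint)
  moreover have "rayleigh_sup c v - (1 / 8) ^ k \<le> jacobi_form c v (A k) (B k) (X k)" for k
    using W(1)[of k] by (simp add: P_def A_def B_def X_def)
  ultimately show thesis by (rule that)
qed

text \<open>Since \<open>H - M \<le> 0\<close> on finitely supported vectors, test it against a truncation of
  \<open>r\<close> plus \<open>t x\<close>: the cross term is exactly \<open>2 t s\<close> and the \<open>x\<close> term is at least \<open>-t\<^sup>2 \<epsilon>\<close>.\<close>
lemma window_defect_bound:
  assumes bounds: "\<And>n. \<bar>c n\<bar> \<le> C" "\<And>n. \<bar>v n\<bar> \<le> C"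
    and x: "vanishes_outside a b x" "sqnorm a b x = 1" "rayleigh_sup c v - \<epsilon> \<le> jacobi_form c v a b x"
    and r: "\<And>n. n \<in> {a..b} \<Longrightarrow> jacobi c v r n - rayleigh_sup c v * r n = s * x n"
    and U: "\<And>F. finite F \<Longrightarrow> (\<Sum>n\<in>F. (r n)\<^sup>2) \<le> U"
  shows "2 * t * s - t\<^sup>2 * \<epsilon> \<le> 3 * (C + \<bar>rayleigh_sup c v\<bar>) * U"
proof -
  define M where "M = rayleigh_sup c v"
  define v' where "v' = (\<lambda>n. v n - M)"
  define a' b' where "a' = a - 1" and "b' = b + 1"
  define r' where "r' n = (if n \<in> {a'..b'} then r n else 0)" for n
  have r': "vanishes_outside a' b' r'" unfolding vanishes_outside_def r'_def by auto
  have x': "vanishes_outside a' b' x" using vanishes_outside_mono[OF x(1)] by (simp add: a'_def b'_def)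
  define y where "y = (\<lambda>n. r' n + t * x n)"
  have "vanishes_outside a' b' y" using r' x' by (simp add: vanishes_outside_def y_def)
  then have "jacobi_form c v a' b' y \<le> M * sqnorm a' b' y"
    unfolding M_def by (rule jacobi_form_le_rayleigh_sup[where C=C, OF bounds])
  then have "jacobi_form c v' a' b' y \<le> 0"
    by (simp add: v'_def jacobi_form_shift_potential)
  then have "jacobi_form c v' a' b' r' + 2 * t * jacobi_pair c v' a' b' r' x
      + t\<^sup>2 * jacobi_form c v' a' b' x \<le> 0"
    unfolding y_def jacobi_form_add[OF r' x'] .
  moreover have "jacobi_form c v' a' b' x \<ge> - \<epsilon>"
    using x extend_window[OF x(1), of a' b'] unfolding v'_def jacobi_form_shift_potential M_def
    by (simp add: a'_def b'_def)
  then have "t\<^sup>2 * jacobi_form c v' a' b' x \<ge> t\<^sup>2 * (- \<epsilon>)"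
    by (intro mult_left_mono) auto
  moreover have "jacobi_pair c v' a' b' r' x = s"
  proof -
    have "jacobi c v' r' n = s * x n" if "n \<in> {a..b}" for n
      using that r[OF that] by (simp add: jacobi_def v'_def r'_def a'_def b'_def M_def algebra_simps)
    then have "jacobi_pair c v' a b r' x = s"
      by (rule jacobi_pair_eq_if_jacobi_eq[OF _ x(2)])
    then show ?thesis
      using extend_window(2)[OF x(1), of a' b'] by (simp add: a'_def b'_def)
  qed
  moreover have "jacobi_form c v' a' b' r' \<ge> - (3 * (C + \<bar>M\<bar>) * U)"
  proof -
    have "\<bar>jacobi_form c v' a' b' r'\<bar> \<le> 3 * (C + \<bar>M\<bar>) * sqnorm a' b' r'"
      unfolding v'_def by (rule abs_jacobi_form_shift_potential_le[where C=C, OF r' bounds])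
    also have "\<dots> \<le> 3 * (C + \<bar>M\<bar>) * U"
      using U[of "{a'..b'}"] bounds(1)[of 0] by (intro mult_left_mono) (auto simp: sqnorm_def r'_def)
    finally show ?thesis by linarith
  qed
  ultimately show ?thesis unfolding M_def by (simp add: algebra_simps)
qed

lemma Re_jacobi_complex: "Re (jacobi_complex c v u n) = jacobi c v (\<lambda>n. Re (u n)) n"
  unfolding jacobi_complex_def jacobi_def by simp

lemma sum_squares_Re_le_infsum:
  assumes "u \<in> l2Z" "finite F"
  shows "(\<Sum>n\<in>F. (Re (u n))\<^sup>2) \<le> infsum (\<lambda>n. (cmod (u n))\<^sup>2) UNIV"
proof -
  have "(\<Sum>n\<in>F. (Re (u n))\<^sup>2) \<le> (\<Sum>n\<in>F. (cmod (u n))\<^sup>2)"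
    by (intro sum_mono) (metis abs_Re_le_cmod abs_ge_zero power2_abs power_mono)
  also have "\<dots> \<le> infsum (\<lambda>n. (cmod (u n))\<^sup>2) UNIV"
    by (rule finite_sum_le_infsum) (use assms in \<open>auto simp: l2Z_def\<close>)
  finally show ?thesis .
qed

lemma rayleigh_sup_not_in_range:
  assumes bounds: "\<And>n. \<bar>c n\<bar> \<le> C" "\<And>n. \<bar>v n\<bar> \<le> C" and "far_almost_periodic c v"
  shows "\<not> l2Z \<subseteq> (\<lambda>u n. jacobi_complex c v u n - of_real (rayleigh_sup c v) * u n) ` l2Z"
proof
  define M where "M = rayleigh_sup c v"
  obtain A B X where "separated_windows A B X"
    and near_max: "\<And>k. M - (1 / 8) ^ k \<le> jacobi_form c v (A k) (B k) (X k)"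
    using near_maximiser_windows[where c=c and v=v and C=C] assms unfolding M_def by metis
  interpret separated_windows A B X by fact
  assume "l2Z \<subseteq> (\<lambda>u n. jacobi_complex c v u n - of_real M * u n) ` l2Z"
  then obtain u where u: "u \<in> l2Z" and eq: "(\<lambda>n. of_real (glued n)) = (\<lambda>n. jacobi_complex c v u n - of_real M * u n)"
    using glued_in_l2Z unfolding M_def by blast
  define r where "r = (\<lambda>n. Re (u n))"
  have r: "jacobi c v r n - M * r n = glued n" for n
    using arg_cong[OF fun_cong[OF eq, of n], of Re] by (simp add: Re_jacobi_complex r_def)
  define U where "U = infsum (\<lambda>n. (cmod (u n))\<^sup>2) UNIV"
  define K where "K = 3 * (C + \<bar>M\<bar>) * U"
  obtain k where k: "K < 2 ^ k" using real_arch_pow[of 2 K] by auto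
  have "2 * 4 ^ k * (1 / 2) ^ k - (4 ^ k)\<^sup>2 * (1 / 8) ^ k \<le> K"
    unfolding K_def M_def
  proof (rule window_defect_bound[where c=c and v=v and C=C, OF bounds vanishes normalised])
    show "rayleigh_sup c v - (1 / 8) ^ k \<le> jacobi_form c v (A k) (B k) (X k)"
      using near_max unfolding M_def .
    show "jacobi c v r n - rayleigh_sup c v * r n = (1 / 2) ^ k * X k n" if "n \<in> {A k..B k}" for n
      using r glued_on_window[OF that] unfolding M_def by simp
    show "(\<Sum>n\<in>F. (r n)\<^sup>2) \<le> U" if "finite F" for F
      unfolding r_def U_def by (rule sum_squares_Re_le_infsum[OF u that])
  qed
  moreover have "2 * 4 ^ k * (1 / 2) ^ k - (4 ^ k)\<^sup>2 * (1 / 8) ^ k = (2 ^ k :: real)"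
  proof -
    have "(4::real) ^ k = 2 ^ k * 2 ^ k" "(8::real) ^ k = 2 ^ k * 2 ^ k * 2 ^ k"
      by (simp_all flip: power_mult_distrib)
    then show ?thesis by (simp add: power_one_over power2_eq_square field_simps)
  qed
  ultimately show False using k by simp
qed

lemma jacobi_complex_uminus: "jacobi_complex (\<lambda>n. - c n) (\<lambda>n. - v n) u n = - jacobi_complex c v u n"
  unfolding jacobi_complex_def by (simp add: algebra_simps)

lemma l2Z_uminus: "u \<in> l2Z \<Longrightarrow> (\<lambda>n. - u n) \<in> l2Z"
  unfolding l2Z_def by simp

lemma rayleigh_inf_not_in_range:
  assumes bounds: "\<And>n. \<bar>c n\<bar> \<le> C" "\<And>n. \<bar>v n\<bar> \<le> C" and "far_almost_periodic c v"
  shows "\<not> l2Z \<subseteq> (\<lambda>u n. jacobi_complex c v u n - of_real (rayleigh_inf c v) * u n) ` l2Z"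
proof
  define M where "M = rayleigh_sup (\<lambda>n. - c n) (\<lambda>n. - v n)"
  have "\<not> l2Z \<subseteq> (\<lambda>u n. jacobi_complex (\<lambda>n. - c n) (\<lambda>n. - v n) u n - of_real M * u n) ` l2Z"
    unfolding M_def
    by (rule rayleigh_sup_not_in_range[where C=C])
      (use assms far_almost_periodic_uminus in auto)
  then obtain w where w: "w \<in> l2Z"
    and not_range: "\<And>u. u \<in> l2Z \<Longrightarrow> (\<lambda>n. - jacobi_complex c v u n - of_real M * u n) \<noteq> w"
    by (auto simp: jacobi_complex_uminus)
  assume "l2Z \<subseteq> (\<lambda>u n. jacobi_complex c v u n - of_real (rayleigh_inf c v) * u n) ` l2Z"
  then obtain u where "u \<in> l2Z" "(\<lambda>n. - w n) = (\<lambda>n. jacobi_complex c v u n + of_real M * u n)"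
    using l2Z_uminus[OF w] by (auto simp: rayleigh_inf_eq_neg_sup M_def)
  then show False
    using not_range by (metis (no_types, lifting) ext minus_add_distrib minus_minus diff_conv_add_uminus)
qed

lemma Hop_eq_jacobi_complex: "Hop lam \<alpha> \<theta> = jacobi_complex (chop lam \<alpha> \<theta>) (vpot \<alpha> \<theta>)"
  by (simp add: fun_eq_iff Hop_def jacobi_complex_def)

lemma in_specH_if_not_in_range:
  "\<not> l2Z \<subseteq> (\<lambda>u n. Hop lam \<alpha> \<theta> u n - E * u n) ` l2Z \<Longrightarrow> E \<in> specH lam \<alpha> \<theta>"
  unfolding specH_def bij_betw_def by auto

lemma abs_chop_vpot_le:
  "\<bar>chop lam \<alpha> \<theta> n\<bar> \<le> \<bar>lam\<bar> + 1" "\<bar>vpot \<alpha> \<theta> n\<bar> \<le> \<bar>lam\<bar> + 1"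
  unfolding chop_def vpot_def by (auto simp: abs_cos_le_one intro: add_increasing)

lemma abs_cos_diff_le:
  fixes x y :: real
  shows "\<bar>cos x - cos y\<bar> \<le> \<bar>x - y\<bar>"
proof -
  have "\<bar>cos x - cos y\<bar> = 2 * \<bar>sin ((x + y) / 2)\<bar> * \<bar>sin ((y - x) / 2)\<bar>"
    unfolding cos_diff_cos by (simp add: abs_mult)
  also have "\<dots> \<le> 2 * 1 * \<bar>(y - x) / 2\<bar>"
    by (intro mult_mono abs_sin_x_le_abs_x) auto
  finally show ?thesis by simp
qed

lemma abs_cos_2pi_shift_le: "\<bar>cos (2 * pi * (y + z)) - cos (2 * pi * y)\<bar> \<le> 2 * pi * \<bar>z - of_int h\<bar>"
proof -
  have "cos (2 * pi * (y + z)) = cos (2 * pi * (y + (z - of_int h)) + 2 * pi * of_int h)"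
    by (simp add: algebra_simps)
  also have "\<dots> = cos (2 * pi * (y + (z - of_int h)))"
    by (simp add: cos_add)
  finally have "\<bar>cos (2 * pi * (y + z)) - cos (2 * pi * y)\<bar>
      \<le> \<bar>2 * pi * (y + (z - of_int h)) - 2 * pi * y\<bar>"
    using abs_cos_diff_le by simp
  also have "\<dots> = \<bar>2 * pi * (z - of_int h)\<bar>"
    by (simp add: algebra_simps)
  also have "\<dots> = 2 * pi * \<bar>z - of_int h\<bar>"
    by (simp add: abs_mult)
  finally show ?thesis .
qed

lemma irrational_near_integer_multiple:
  fixes \<beta> :: real
  assumes "\<beta> \<notin> \<rat>" "\<delta> > 0"
  obtains k h :: int where "L \<le> k" "\<bar>of_int k * \<beta> - of_int h\<bar> \<le> \<delta>"
proof -
  have "infinite (approx_set \<beta>)"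
    using assms(1) rational_iff_finite_approx_set by blast
  then obtain h k where hk: "(h, k) \<in> approx_set \<beta>" "k > max L \<lceil>1 / \<delta>\<rceil>"
    using infinite_approx_set by blast
  have k: "k > 0" and approx: "\<bar>\<beta> - of_int h / of_int k\<bar> < 1 / (of_int k)\<^sup>2"
    using hk(1) unfolding approx_set_def by auto
  have "of_int k * \<beta> - of_int h = of_int k * (\<beta> - of_int h / of_int k)"
    using k by (simp add: field_simps)
  then have "\<bar>of_int k * \<beta> - of_int h\<bar> = of_int k * \<bar>\<beta> - of_int h / of_int k\<bar>"
    using k by (simp add: abs_mult)
  also have "\<dots> \<le> of_int k * (1 / (of_int k)\<^sup>2)"
    using approx k by (intro mult_left_mono) auto
  also have "\<dots> = 1 / of_int k"
    using k by (simp add: power2_eq_square)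
  also have "\<dots> \<le> \<delta>"
  proof -
    have "1 / \<delta> < of_int k" using hk(2) by linarith
    then show ?thesis using k assms(2) by (simp add: field_simps)
  qed
  finally show thesis using that[of k h] hk(2) by simp
qed

lemma far_almost_periodic_chop_vpot:
  assumes "\<alpha> \<notin> \<rat>"
  shows "far_almost_periodic (chop lam \<alpha> \<theta>) (vpot \<alpha> \<theta>)"
  unfolding far_almost_periodic_def
proof (intro allI impI)
  fix \<delta> :: real and L :: int
  assume "\<delta> > 0"
  have "2 * \<alpha> \<notin> \<rat>"
    using assms Rats_divide[of "2 * \<alpha>" 2] by auto
  then obtain k h where k: "\<bar>L\<bar> \<le> k" and h: "\<bar>of_int k * (2 * \<alpha>) - of_int h\<bar> \<le> \<delta> / (2 * pi)"
    using irrational_near_integer_multiple[of "2 * \<alpha>" "\<delta> / (2 * pi)" "\<bar>L\<bar>"] \<open>\<delta> > 0\<close> by auto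
  have close: "\<bar>cos (2 * pi * (y + of_int k * (2 * \<alpha>))) - cos (2 * pi * y)\<bar> \<le> \<delta>" for y
    using abs_cos_2pi_shift_le[of y "of_int k * (2 * \<alpha>)" h] h by (simp add: field_simps)
  have shift: "real_of_int (n + 2 * k) * \<alpha> + \<theta> = (real_of_int n * \<alpha> + \<theta>) + of_int k * (2 * \<alpha>)"
    and shift': "real_of_int (n + 2 * k - 1) * \<alpha> + \<theta>
      = (real_of_int (n - 1) * \<alpha> + \<theta>) + of_int k * (2 * \<alpha>)"
    for n by (simp_all add: algebra_simps)
  show "\<exists>s\<ge>L. \<forall>n. \<bar>chop lam \<alpha> \<theta> (n + s) - chop lam \<alpha> \<theta> n\<bar> \<le> \<delta>
      \<and> \<bar>vpot \<alpha> \<theta> (n + s) - vpot \<alpha> \<theta> n\<bar> \<le> \<delta>"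
  proof (intro exI[of _ "2 * k"] conjI allI)
    show "L \<le> 2 * k" using k by linarith
    fix n :: int
    show "\<bar>chop lam \<alpha> \<theta> (n + 2 * k) - chop lam \<alpha> \<theta> n\<bar> \<le> \<delta>"
      unfolding chop_def shift using close \<open>\<delta> > 0\<close> by simp
    show "\<bar>vpot \<alpha> \<theta> (n + 2 * k) - vpot \<alpha> \<theta> n\<bar> \<le> \<delta>"
      unfolding vpot_def shift shift' using close by simp
  qed
qed

lemma rayleigh_sup_inf_in_specH:
  assumes "\<alpha> \<notin> \<rat>"
  shows "of_real (rayleigh_sup (chop lam \<alpha> \<theta>) (vpot \<alpha> \<theta>)) \<in> specH lam \<alpha> \<theta>"
    and "of_real (rayleigh_inf (chop lam \<alpha> \<theta>) (vpot \<alpha> \<theta>)) \<in> specH lam \<alpha> \<theta>"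
  by (intro in_specH_if_not_in_range, unfold Hop_eq_jacobi_complex,
      rule rayleigh_sup_not_in_range rayleigh_inf_not_in_range,
      rule abs_chop_vpot_le, rule abs_chop_vpot_le, rule far_almost_periodic_chop_vpot[OF assms])+

lemma two_site_rayleigh_bounds:
  assumes "\<And>n. \<bar>c n\<bar> \<le> C" "\<And>n. \<bar>v n\<bar> \<le> C" "\<sigma>\<^sup>2 = 1"
  shows "rayleigh_inf c v \<le> \<sigma> * c 1 + (v 1 + v 2) / 2"
    and "\<sigma> * c 1 + (v 1 + v 2) / 2 \<le> rayleigh_sup c v"
proof -
  define x where "x n = (if n = 1 then 1 else if n = 2 then \<sigma> else 0)" for n :: int
  have x: "vanishes_outside 1 2 x" unfolding vanishes_outside_def x_def by auto
  have I: "{1..2::int} = {1, 2}" by auto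
  have "sqnorm 1 2 x = 2" unfolding sqnorm_def I x_def using assms(3) by simp
  moreover have "jacobi_form c v 1 2 x = 2 * (\<sigma> * c 1 + (v 1 + v 2) / 2)"
    unfolding jacobi_pair_def I x_def jacobi_def using assms(3)
    by (simp add: power2_eq_square algebra_simps)
  ultimately have q: "jacobi_form c v 1 2 x / sqnorm 1 2 x = \<sigma> * c 1 + (v 1 + v 2) / 2"
    by simp
  have "sqnorm 1 2 x > 0" using \<open>sqnorm 1 2 x = 2\<close> by simp
  from rayleigh_quotient_bounds[where c=c and v=v and C=C, OF assms(1,2) x this]
  show "rayleigh_inf c v \<le> \<sigma> * c 1 + (v 1 + v 2) / 2"
    "\<sigma> * c 1 + (v 1 + v 2) / 2 \<le> rayleigh_sup c v" unfolding q .
qed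

lemma vpot_1_add_vpot_2:
  "vpot \<alpha> \<theta> 1 + vpot \<alpha> \<theta> 2 = 2 * cos (2 * pi * (\<alpha> + \<theta>)) * cos (2 * pi * \<alpha>)"
proof -
  have "vpot \<alpha> \<theta> 1 + vpot \<alpha> \<theta> 2 = cos (2 * pi * \<theta>) + cos (2 * pi * (2 * \<alpha> + \<theta>))"
    by (simp add: vpot_def)
  also have "\<dots> = 2 * cos ((2 * pi * \<theta> + 2 * pi * (2 * \<alpha> + \<theta>)) / 2)
      * cos ((2 * pi * \<theta> - 2 * pi * (2 * \<alpha> + \<theta>)) / 2)"
    by (rule cos_plus_cos)
  also have "(2 * pi * \<theta> + 2 * pi * (2 * \<alpha> + \<theta>)) / 2 = 2 * pi * (\<alpha> + \<theta>)"
    by (simp add: algebra_simps)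
  also have "(2 * pi * \<theta> - 2 * pi * (2 * \<alpha> + \<theta>)) / 2 = - (2 * pi * \<alpha>)"
    by (simp add: algebra_simps)
  finally show ?thesis by simp
qed

lemma cos_2pi_irrational_neq_0:
  assumes "\<alpha> \<notin> \<rat>"
  shows "cos (2 * pi * \<alpha>) \<noteq> 0"
proof
  assume "cos (2 * pi * \<alpha>) = 0"
  then obtain i :: int where "2 * pi * \<alpha> = of_int i * (pi / 2)"
    using cos_zero_iff_int by blast
  then have "\<alpha> = of_int i / 4" by (simp add: field_simps)
  moreover have "of_int i / 4 \<in> \<rat>" by (intro Rats_divide) auto
  ultimately have "\<alpha> \<in> \<rat>" by (simp only:)
  then show False using assms by simp
qed

lemma vpot_1_add_vpot_2_neq_0:
  assumes "\<alpha> \<notin> \<rat>" "\<theta> \<in> T0 \<alpha>"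
  shows "vpot \<alpha> \<theta> 1 + vpot \<alpha> \<theta> 2 \<noteq> 0"
  using assms(2) cos_2pi_irrational_neq_0[OF assms(1)]
  by (auto simp: vpot_1_add_vpot_2 T0_def add.commute dest: spec[of _ 1])

theorem lemma3p3:
  fixes lam \<alpha> \<theta> :: real
  assumes "lam > 0" and "\<alpha> \<notin> \<rat>" and "\<theta> \<in> T0 \<alpha>"
  shows "\<exists>E \<in> specH lam \<alpha> \<theta>. E \<notin> complex_of_real ` {-lam..lam}"
proof -
  define c v where "c = chop lam \<alpha> \<theta>" and "v = vpot \<alpha> \<theta>"
  have sup_in: "of_real (rayleigh_sup c v) \<in> specH lam \<alpha> \<theta>"
    and inf_in: "of_real (rayleigh_inf c v) \<in> specH lam \<alpha> \<theta>"
    unfolding c_def v_def by (rule rayleigh_sup_inf_in_specH[OF assms(2)])+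
  have bounds: "\<bar>c n\<bar> \<le> \<bar>lam\<bar> + 1" "\<bar>v n\<bar> \<le> \<bar>lam\<bar> + 1" for n
    unfolding c_def v_def by (rule abs_chop_vpot_le)+
  have "c 1 = lam" by (simp add: c_def chop_def)
  then have inf_le: "rayleigh_inf c v \<le> - lam + (v 1 + v 2) / 2"
    and sup_ge: "lam + (v 1 + v 2) / 2 \<le> rayleigh_sup c v"
    using two_site_rayleigh_bounds[where c=c and v=v and \<sigma>="-1", OF bounds]
      two_site_rayleigh_bounds[where c=c and v=v and \<sigma>=1, OF bounds] by auto
  have nonzero: "v 1 + v 2 \<noteq> 0"
    unfolding v_def by (rule vpot_1_add_vpot_2_neq_0[OF assms(2,3)])
  show ?thesis
  proof (cases "v 1 + v 2 > 0")
    case True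
    with sup_ge sup_in show ?thesis
      by (intro bexI[of _ "of_real (rayleigh_sup c v)"]) (auto simp: field_simps)
  next
    case False
    with inf_le inf_in nonzero show ?thesis
      by (intro bexI[of _ "of_real (rayleigh_inf c v)"]) (auto simp: field_simps)
  qed
qed

end
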